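(* Let $G$ be a LEF-group and let $\mathcal{C}$ be a concrete category with a terminal object and fibered products. Let $(A,a)$ be a pointed object of $\mathcal{C}$ such that $A$ is finite product Hopfian or finite product co-Hopfian. If $\tau,\sigma\in CA_{\mathcal{C}}(G,(A,a))$ satisfy $\sigma\circ\tau=\mathrm{Id}$, then $\tau\circ\sigma=\mathrm{Id}$.
   Context: A group $G$ is LEF if every finite subset $S\subset G$ admits an injective map $\varphi\colon S\to H$ into some finite group $H$ with $\varphi(ab)=\varphi(a)\varphi(b)$ whenever $a,b,ab\in S$. A concrete category is a category with a faithful functor to sets; objects and morphisms are identified with their underlying sets and maps. In a category, an object $A$ is Hopfian if every epimorphism $A\to A$ is an automorphism, co-Hopfian if every monomorphism $A\to A$ is an automorphism; $A$ is finite product Hopfian (resp. co-Hopfian) if $A^n$ is Hopfian (resp. co-Hopfian) for all $n\in\mathbb{N}$. For finite $E$, $A^E$ is the product over the terminal object $\varepsilon$ of copies of $A$ indexed by $E$. A pointed object is $(A,a)$ with $a\colon\varepsilon\to A$; a pointed morphism $(A,a)\to(B,b)$ is $f\colon A\to B$ with $f\circ a=b$; $A^E$ is pointed by $a^E$ with all components $a$. $G$ acts on $A^G$ by $(gc)(h)=c(g^{-1}h)$; a cellular automaton is a map $\tau\colon A^G\to A^G$ with $(\tau(c))(g)=\mu((g^{-1}c)|_M)$ for some finite $M\subset G$ and map $\mu\colon A^M\to A$. $CA_{\mathcal{C}}(G,(A,a))$ is the set of cellular automata admitting, for some finite memory set $M$, a local defining map that is the underlying map of a pointed morphism $(A^M,a^M)\to(A,a)$.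 *)

theory Defs
  imports "HOL-Algebra.Group"
begin

text \<open>A category with objects of type 'o and morphisms of type 'm, together with a
  faithful functor to sets: every object X has an underlying set USet X (of elements
  of type 'e) and every morphism f an underlying map UMap f.\<close>

record ('o, 'm, 'e) concrete_cat =
  Obj  :: "'o set"
  Mor  :: "'m set"
  Dom  :: "'m \<Rightarrow> 'o"
  Cod  :: "'m \<Rightarrow> 'o"
  Cmp  :: "'m \<Rightarrow> 'm \<Rightarrow> 'm"   (* Cmp g f = g o f *)
  Idm  :: "'o \<Rightarrow> 'm"
  USet :: "'o \<Rightarrow> 'e set"
  UMap :: "'m \<Rightarrow> 'e \<Rightarrow> 'e"

definition hom :: "('o, 'm, 'e) concrete_cat \<Rightarrow> 'o \<Rightarrow> 'o \<Rightarrow> 'm set" where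
  "hom C X Y = {f \<in> Mor C. Dom C f = X \<and> Cod C f = Y}"

definition concrete_category :: "('o, 'm, 'e) concrete_cat \<Rightarrow> bool" where
  "concrete_category C \<longleftrightarrow>
     (\<forall>f\<in>Mor C. Dom C f \<in> Obj C \<and> Cod C f \<in> Obj C)
   \<and> (\<forall>X\<in>Obj C. Idm C X \<in> hom C X X)
   \<and> (\<forall>f\<in>Mor C. \<forall>g\<in>Mor C. Cod C f = Dom C g \<longrightarrow> Cmp C g f \<in> hom C (Dom C f) (Cod C g))
   \<and> (\<forall>f\<in>Mor C. \<forall>g\<in>Mor C. \<forall>h\<in>Mor C. Cod C f = Dom C g \<and> Cod C g = Dom C h \<longrightarrow>
        Cmp C h (Cmp C g f) = Cmp C (Cmp C h g) f)
   \<and> (\<forall>f\<in>Mor C. Cmp C (Idm C (Cod C f)) f = f \<and> Cmp C f (Idm C (Dom C f)) = f)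
   \<and> (\<forall>f\<in>Mor C. \<forall>x\<in>USet C (Dom C f). UMap C f x \<in> USet C (Cod C f))
   \<and> (\<forall>f\<in>Mor C. \<forall>g\<in>Mor C. Cod C f = Dom C g \<longrightarrow>
        (\<forall>x\<in>USet C (Dom C f). UMap C (Cmp C g f) x = UMap C g (UMap C f x)))
   \<and> (\<forall>X\<in>Obj C. \<forall>x\<in>USet C X. UMap C (Idm C X) x = x)
   \<and> (\<forall>X Y f g. f \<in> hom C X Y \<and> g \<in> hom C X Y \<and> (\<forall>x\<in>USet C X. UMap C f x = UMap C g x)
        \<longrightarrow> f = g)"

definition is_terminal :: "('o, 'm, 'e) concrete_cat \<Rightarrow> 'o \<Rightarrow> bool" where
  "is_terminal C T \<longleftrightarrow> T \<in> Obj C \<and> (\<forall>X\<in>Obj C. \<exists>!f. f \<in> hom C X T)"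

text \<open>Convention for concrete categories (Ceccherini-Silberstein--Coornaert): having a
  terminal object / fibered products includes that the forgetful functor preserves them,
  i.e. the underlying set of a terminal object is a singleton and the underlying set of a
  fibered product is the set-theoretic fibered product.\<close>

definition has_terminal_object :: "('o, 'm, 'e) concrete_cat \<Rightarrow> bool" where
  "has_terminal_object C \<longleftrightarrow> (\<exists>T. is_terminal C T)
     \<and> (\<forall>T. is_terminal C T \<longrightarrow> (\<exists>t. USet C T = {t}))"

definition is_pullback ::
  "('o, 'm, 'e) concrete_cat \<Rightarrow> 'm \<Rightarrow> 'm \<Rightarrow> 'o \<Rightarrow> 'm \<Rightarrow> 'm \<Rightarrow> bool" where
  "is_pullback C f g P p q \<longleftrightarrow>
     f \<in> Mor C \<and> g \<in> Mor C \<and> Cod C f = Cod C g \<and> P \<in> Obj C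
   \<and> p \<in> hom C P (Dom C f) \<and> q \<in> hom C P (Dom C g) \<and> Cmp C f p = Cmp C g q
   \<and> (\<forall>W\<in>Obj C. \<forall>u v. u \<in> hom C W (Dom C f) \<and> v \<in> hom C W (Dom C g) \<and> Cmp C f u = Cmp C g v
        \<longrightarrow> (\<exists>!h. h \<in> hom C W P \<and> Cmp C p h = u \<and> Cmp C q h = v))"

definition has_fibered_products :: "('o, 'm, 'e) concrete_cat \<Rightarrow> bool" where
  "has_fibered_products C \<longleftrightarrow>
     (\<forall>f\<in>Mor C. \<forall>g\<in>Mor C. Cod C f = Cod C g \<longrightarrow> (\<exists>P p q. is_pullback C f g P p q))
   \<and> (\<forall>f g P p q. is_pullback C f g P p q \<longrightarrow>
        bij_betw (\<lambda>x. (UMap C p x, UMap C q x)) (USet C P)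
          {(x, y). x \<in> USet C (Dom C f) \<and> y \<in> USet C (Dom C g) \<and> UMap C f x = UMap C g y})"

definition is_power ::
  "('o, 'm, 'e) concrete_cat \<Rightarrow> 'o \<Rightarrow> 'i set \<Rightarrow> 'o \<Rightarrow> ('i \<Rightarrow> 'm) \<Rightarrow> bool" where
  "is_power C A E P \<pi> \<longleftrightarrow> A \<in> Obj C \<and> P \<in> Obj C \<and> (\<forall>e\<in>E. \<pi> e \<in> hom C P A)
   \<and> (\<forall>X\<in>Obj C. \<forall>h. (\<forall>e\<in>E. h e \<in> hom C X A) \<longrightarrow>
        (\<exists>!u. u \<in> hom C X P \<and> (\<forall>e\<in>E. Cmp C (\<pi> e) u = h e)))"

definition epi :: "('o, 'm, 'e) concrete_cat \<Rightarrow> 'm \<Rightarrow> bool" where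
  "epi C f \<longleftrightarrow> f \<in> Mor C \<and> (\<forall>Z\<in>Obj C. \<forall>g h. g \<in> hom C (Cod C f) Z \<and> h \<in> hom C (Cod C f) Z
      \<and> Cmp C g f = Cmp C h f \<longrightarrow> g = h)"

definition mono :: "('o, 'm, 'e) concrete_cat \<Rightarrow> 'm \<Rightarrow> bool" where
  "mono C f \<longleftrightarrow> f \<in> Mor C \<and> (\<forall>Z\<in>Obj C. \<forall>g h. g \<in> hom C Z (Dom C f) \<and> h \<in> hom C Z (Dom C f)
      \<and> Cmp C f g = Cmp C f h \<longrightarrow> g = h)"

definition iso :: "('o, 'm, 'e) concrete_cat \<Rightarrow> 'm \<Rightarrow> bool" where
  "iso C f \<longleftrightarrow> f \<in> Mor C \<and> (\<exists>g \<in> hom C (Cod C f) (Dom C f).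
      Cmp C g f = Idm C (Dom C f) \<and> Cmp C f g = Idm C (Cod C f))"

definition hopfian :: "('o, 'm, 'e) concrete_cat \<Rightarrow> 'o \<Rightarrow> bool" where
  "hopfian C X \<longleftrightarrow> (\<forall>f \<in> hom C X X. epi C f \<longrightarrow> iso C f)"

definition cohopfian :: "('o, 'm, 'e) concrete_cat \<Rightarrow> 'o \<Rightarrow> bool" where
  "cohopfian C X \<longleftrightarrow> (\<forall>f \<in> hom C X X. mono C f \<longrightarrow> iso C f)"

definition fin_prod_hopfian :: "('o, 'm, 'e) concrete_cat \<Rightarrow> 'o \<Rightarrow> bool" where
  "fin_prod_hopfian C A \<longleftrightarrow>
     (\<forall>(n::nat) P (\<pi>::nat \<Rightarrow> 'm). is_power C A {..<n} P \<pi> \<longrightarrow> hopfian C P)"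

definition fin_prod_cohopfian :: "('o, 'm, 'e) concrete_cat \<Rightarrow> 'o \<Rightarrow> bool" where
  "fin_prod_cohopfian C A \<longleftrightarrow>
     (\<forall>(n::nat) P (\<pi>::nat \<Rightarrow> 'm). is_power C A {..<n} P \<pi> \<longrightarrow> cohopfian C P)"

text \<open>The group G is a type of class group_add (written additively, not necessarily
  commutative). Finite target groups are HOL-Algebra groups with carrier in nat
  (every finite group has an isomorphic copy of this form).\<close>

definition LEF :: "'g::group_add itself \<Rightarrow> bool" where
  "LEF _ \<longleftrightarrow> (\<forall>S::'g set. finite S \<longrightarrow>
     (\<exists>(H::nat monoid) \<phi>. group H \<and> finite (carrier H) \<and> \<phi> \<in> S \<rightarrow> carrier H \<and> inj_on \<phi> S
        \<and> (\<forall>a\<in>S. \<forall>b\<in>S. a + b \<in> S \<longrightarrow> \<phi> (a + b) = \<phi> a \<otimes>\<^bsub>H\<^esub> \<phi> b)))"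

definition configs :: "('o, 'm, 'e) concrete_cat \<Rightarrow> 'o \<Rightarrow> ('g \<Rightarrow> 'e) set" where
  "configs C A = {c. \<forall>g. c g \<in> USet C A}"

text \<open>CA_C(G,(A,a)): cellular automata (tau c)(g) = mu((g^-1 c)|_M), where
  (g^-1 c)(m) = c(g m) and mu is the underlying map of a pointed morphism
  (A^M, a^M) -> (A, a). An element of the underlying set of A^M is identified with
  the function M -> A given by its projections.\<close>

definition CA :: "('o, 'm, 'e) concrete_cat \<Rightarrow> 'o \<Rightarrow> 'm
    \<Rightarrow> (('g::group_add \<Rightarrow> 'e) \<Rightarrow> ('g \<Rightarrow> 'e)) set" where
  "CA C A a = {\<tau>. \<exists>(M::'g set) P \<pi> f. finite M \<and> is_power C A M P \<pi> \<and> f \<in> hom C P A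
      \<and> (\<forall>aM. aM \<in> hom C (Dom C a) P \<and> (\<forall>m\<in>M. Cmp C (\<pi> m) aM = a) \<longrightarrow> Cmp C f aM = a)
      \<and> (\<forall>c \<in> configs C A. \<forall>g. \<tau> c g =
           UMap C f (THE x. x \<in> USet C P \<and> (\<forall>m\<in>M. UMap C (\<pi> m) x = c (g + m))))}"

end

theory Submission
  imports Defs
begin

text \<open>Choose a finite set S \<subseteq> G containing 0, the memory sets of \<tau> and \<sigma> and their sums.
  Since G is LEF, S embeds into a finite group H compatibly with the sums inside S, so right
  multiplication by the image of S is a partial action of S on H. The local rules of \<tau> and \<sigma>
  then induce endomorphisms T and \<Sigma> of the finite power A^H, which exists and has the
  set-theoretic power as underlying set because C has a terminal object and fibered products.
  A point of A^H read along the orbit of h is a configuration, and \<Sigma> \<circ> T acts on it as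
  \<sigma> \<circ> \<tau> does; hence \<Sigma> \<circ> T = id. This makes \<Sigma> epi and T mono, so T \<circ> \<Sigma> = id
  because A^H is Hopfian or co-Hopfian. Conversely, any configuration near g can be read into
  A^H along the orbit of the identity, and T \<circ> \<Sigma> = id then yields \<tau> \<circ> \<sigma> = id.\<close>

locale concrete =
  fixes C :: "('o, 'm, 'e) concrete_cat"
  assumes hom_objs: "f \<in> hom C X Y \<Longrightarrow> X \<in> Obj C \<and> Y \<in> Obj C"
    and id_in_hom: "X \<in> Obj C \<Longrightarrow> Idm C X \<in> hom C X X"
    and comp_in_hom: "f \<in> hom C X Y \<Longrightarrow> g \<in> hom C Y Z \<Longrightarrow> Cmp C g f \<in> hom C X Z"
    and comp_assoc: "f \<in> hom C X Y \<Longrightarrow> g \<in> hom C Y Z \<Longrightarrow> h \<in> hom C Z W \<Longrightarrow>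
      Cmp C h (Cmp C g f) = Cmp C (Cmp C h g) f"
    and comp_id_left: "f \<in> hom C X Y \<Longrightarrow> Cmp C (Idm C Y) f = f"
    and comp_id_right: "f \<in> hom C X Y \<Longrightarrow> Cmp C f (Idm C X) = f"
    and umap_in_uset: "f \<in> hom C X Y \<Longrightarrow> x \<in> USet C X \<Longrightarrow> UMap C f x \<in> USet C Y"
    and umap_comp: "f \<in> hom C X Y \<Longrightarrow> g \<in> hom C Y Z \<Longrightarrow> x \<in> USet C X \<Longrightarrow>
      UMap C (Cmp C g f) x = UMap C g (UMap C f x)"
    and umap_id: "X \<in> Obj C \<Longrightarrow> x \<in> USet C X \<Longrightarrow> UMap C (Idm C X) x = x"
    and morphism_eqI: "f \<in> hom C X Y \<Longrightarrow> g \<in> hom C X Y \<Longrightarrow>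
      (\<And>x. x \<in> USet C X \<Longrightarrow> UMap C f x = UMap C g x) \<Longrightarrow> f = g"

lemma concrete_category_imp_concrete:
  assumes "concrete_category C"
  shows "concrete C"
proof -
  have obj: "\<forall>f\<in>Mor C. Dom C f \<in> Obj C \<and> Cod C f \<in> Obj C"
    and idm: "\<forall>X\<in>Obj C. Idm C X \<in> hom C X X"
    and comp: "\<forall>f\<in>Mor C. \<forall>g\<in>Mor C. Cod C f = Dom C g \<longrightarrow> Cmp C g f \<in> hom C (Dom C f) (Cod C g)"
    and assoc: "\<forall>f\<in>Mor C. \<forall>g\<in>Mor C. \<forall>h\<in>Mor C. Cod C f = Dom C g \<and> Cod C g = Dom C h \<longrightarrow>
        Cmp C h (Cmp C g f) = Cmp C (Cmp C h g) f"
    and ident: "\<forall>f\<in>Mor C. Cmp C (Idm C (Cod C f)) f = f \<and> Cmp C f (Idm C (Dom C f)) = f"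
    and umap: "\<forall>f\<in>Mor C. \<forall>x\<in>USet C (Dom C f). UMap C f x \<in> USet C (Cod C f)"
    and umap_cmp: "\<forall>f\<in>Mor C. \<forall>g\<in>Mor C. Cod C f = Dom C g \<longrightarrow>
        (\<forall>x\<in>USet C (Dom C f). UMap C (Cmp C g f) x = UMap C g (UMap C f x))"
    and umap_idm: "\<forall>X\<in>Obj C. \<forall>x\<in>USet C X. UMap C (Idm C X) x = x"
    and faithful: "\<forall>X Y f g. f \<in> hom C X Y \<and> g \<in> hom C X Y \<and> (\<forall>x\<in>USet C X. UMap C f x = UMap C g x)
        \<longrightarrow> f = g"
    using assms unfolding concrete_category_def by blast+
  show ?thesis
  proof
    show "X \<in> Obj C \<and> Y \<in> Obj C" if "f \<in> hom C X Y" for f X Y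
      using obj that unfolding hom_def by auto
    show "Idm C X \<in> hom C X X" if "X \<in> Obj C" for X
      using idm that by blast
    show "Cmp C g f \<in> hom C X Z" if "f \<in> hom C X Y" "g \<in> hom C Y Z" for f g X Y Z
      using comp that unfolding hom_def by auto
    show "Cmp C h (Cmp C g f) = Cmp C (Cmp C h g) f"
      if "f \<in> hom C X Y" "g \<in> hom C Y Z" "h \<in> hom C Z W" for f g h X Y Z W
      using assoc that unfolding hom_def by auto
    show "Cmp C (Idm C Y) f = f" "Cmp C f (Idm C X) = f" if "f \<in> hom C X Y" for f X Y
      using ident that unfolding hom_def by auto
    show "UMap C f x \<in> USet C Y" if "f \<in> hom C X Y" "x \<in> USet C X" for f X Y x
      using umap that unfolding hom_def by auto
    show "UMap C (Cmp C g f) x = UMap C g (UMap C f x)"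
      if "f \<in> hom C X Y" "g \<in> hom C Y Z" "x \<in> USet C X" for f g X Y Z x
      using umap_cmp that unfolding hom_def by auto
    show "UMap C (Idm C X) x = x" if "X \<in> Obj C" "x \<in> USet C X" for X x
      using umap_idm that by blast
    show "f = g" if "f \<in> hom C X Y" "g \<in> hom C X Y" "\<And>x. x \<in> USet C X \<Longrightarrow> UMap C f x = UMap C g x"
      for f g X Y
      using faithful that by blast
  qed
qed

definition concrete_power :: "('o, 'm, 'e) concrete_cat \<Rightarrow> 'o \<Rightarrow> 'i set \<Rightarrow> 'o \<Rightarrow> ('i \<Rightarrow> 'm) \<Rightarrow> bool"
  where "concrete_power C A E P \<pi> \<longleftrightarrow> (\<forall>\<psi>. (\<forall>i\<in>E. \<psi> i \<in> USet C A) \<longrightarrow>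
           (\<exists>!x. x \<in> USet C P \<and> (\<forall>i\<in>E. UMap C (\<pi> i) x = \<psi> i)))"

lemma concrete_powerI:
  assumes "\<And>\<psi>. (\<And>i. i \<in> E \<Longrightarrow> \<psi> i \<in> USet C A) \<Longrightarrow> \<exists>x\<in>USet C P. \<forall>i\<in>E. UMap C (\<pi> i) x = \<psi> i"
    and "\<And>x y. x \<in> USet C P \<Longrightarrow> y \<in> USet C P \<Longrightarrow> \<forall>i\<in>E. UMap C (\<pi> i) x = UMap C (\<pi> i) y \<Longrightarrow> x = y"
  shows "concrete_power C A E P \<pi>"
  unfolding concrete_power_def
proof (intro allI impI)
  fix \<psi> assume "\<forall>i\<in>E. \<psi> i \<in> USet C A"
  then obtain x where x: "x \<in> USet C P" "\<forall>i\<in>E. UMap C (\<pi> i) x = \<psi> i"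
    using assms(1) by blast
  show "\<exists>!x. x \<in> USet C P \<and> (\<forall>i\<in>E. UMap C (\<pi> i) x = \<psi> i)"
  proof (rule ex1I[of _ x])
    fix y assume "y \<in> USet C P \<and> (\<forall>i\<in>E. UMap C (\<pi> i) y = \<psi> i)"
    with x show "y = x" using assms(2)[of y x] by simp
  qed (use x in simp)
qed

lemma concrete_power_ex1:
  assumes "concrete_power C A E P \<pi>" and "\<And>i. i \<in> E \<Longrightarrow> \<psi> i \<in> USet C A"
  shows "\<exists>!x. x \<in> USet C P \<and> (\<forall>i\<in>E. UMap C (\<pi> i) x = \<psi> i)"
  using assms unfolding concrete_power_def by blast

lemma concrete_power_obtain:
  assumes "concrete_power C A E P \<pi>" and "\<And>i. i \<in> E \<Longrightarrow> \<psi> i \<in> USet C A"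
  obtains x where "x \<in> USet C P" and "\<forall>i\<in>E. UMap C (\<pi> i) x = \<psi> i"
  using assms unfolding concrete_power_def by blast

lemma power_objs: "is_power C A E P \<pi> \<Longrightarrow> A \<in> Obj C \<and> P \<in> Obj C"
  unfolding is_power_def by (elim conjE) (intro conjI)

lemma power_proj_in_hom: "is_power C A E P \<pi> \<Longrightarrow> i \<in> E \<Longrightarrow> \<pi> i \<in> hom C P A"
  unfolding is_power_def by (elim conjE) (erule bspec)

lemma power_lift:
  assumes "is_power C A E P \<pi>" and "X \<in> Obj C" and "\<And>i. i \<in> E \<Longrightarrow> h i \<in> hom C X A"
  shows "\<exists>!u. u \<in> hom C X P \<and> (\<forall>i\<in>E. Cmp C (\<pi> i) u = h i)"
proof -
  have "\<forall>X\<in>Obj C. \<forall>h. (\<forall>i\<in>E. h i \<in> hom C X A) \<longrightarrow> (\<exists>!u. u \<in> hom C X P \<and> (\<forall>i\<in>E. Cmp C (\<pi> i) u = h i))"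
    using assms(1) unfolding is_power_def by (elim conjE)
  with assms(2,3) show ?thesis
    by blast
qed

lemma power_reindex:
  assumes pw: "is_power C A E P \<pi>" and \<beta>: "bij_betw \<beta> E' E"
  shows "is_power C A E' P (\<pi> \<circ> \<beta>)"
  unfolding is_power_def
proof (intro conjI ballI allI impI)
  show "A \<in> Obj C" "P \<in> Obj C"
    using power_objs[OF pw] by auto
  show "(\<pi> \<circ> \<beta>) j \<in> hom C P A" if "j \<in> E'" for j
    using that bij_betwE[OF \<beta>] power_proj_in_hom[OF pw] by auto
  fix X h assume X: "X \<in> Obj C" and h: "\<forall>j\<in>E'. h j \<in> hom C X A"
  have inv_in: "inv_into E' \<beta> i \<in> E'" and \<beta>_inv: "\<beta> (inv_into E' \<beta> i) = i" if "i \<in> E" for i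
    using \<beta> that by (auto simp: bij_betw_def intro: inv_into_into f_inv_into_f)
  have inv_\<beta>: "inv_into E' \<beta> (\<beta> j) = j" if "j \<in> E'" for j
    using \<beta> that by (simp add: bij_betw_def)
  have lift_iff: "(\<forall>i\<in>E. Cmp C (\<pi> i) u = h (inv_into E' \<beta> i))
      \<longleftrightarrow> (\<forall>j\<in>E'. Cmp C ((\<pi> \<circ> \<beta>) j) u = h j)" for u
  proof (intro iffI ballI)
    fix j assume "\<forall>i\<in>E. Cmp C (\<pi> i) u = h (inv_into E' \<beta> i)" and j: "j \<in> E'"
    then show "Cmp C ((\<pi> \<circ> \<beta>) j) u = h j"
      using bij_betwE[OF \<beta>] inv_\<beta>[OF j] by auto
  next
    fix i assume "\<forall>j\<in>E'. Cmp C ((\<pi> \<circ> \<beta>) j) u = h j" and i: "i \<in> E"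
    then show "Cmp C (\<pi> i) u = h (inv_into E' \<beta> i)"
      using inv_in[OF i] \<beta>_inv[OF i] by (metis comp_apply)
  qed
  have "\<exists>!u. u \<in> hom C X P \<and> (\<forall>i\<in>E. Cmp C (\<pi> i) u = h (inv_into E' \<beta> i))"
    using h inv_in by (intro power_lift[OF pw X]) blast
  then show "\<exists>!u. u \<in> hom C X P \<and> (\<forall>j\<in>E'. Cmp C ((\<pi> \<circ> \<beta>) j) u = h j)"
    unfolding lift_iff .
qed

context concrete
begin

lemma power_lift_unique:
  assumes "is_power C A E P \<pi>" and "u \<in> hom C X P" and "v \<in> hom C X P"
    and "\<forall>i\<in>E. Cmp C (\<pi> i) u = Cmp C (\<pi> i) v"
  shows "u = v"
proof -
  have "\<exists>!w. w \<in> hom C X P \<and> (\<forall>i\<in>E. Cmp C (\<pi> i) w = Cmp C (\<pi> i) v)"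
    using hom_objs[OF assms(3)] comp_in_hom[OF assms(3) power_proj_in_hom[OF assms(1)]]
    by (intro power_lift[OF assms(1)]) auto
  with assms show ?thesis by blast
qed

lemma power_points_eqI:
  assumes "is_power C A E P \<pi>" and "concrete_power C A E P \<pi>"
    and "x \<in> USet C P" and "y \<in> USet C P" and "\<forall>i\<in>E. UMap C (\<pi> i) x = UMap C (\<pi> i) y"
  shows "x = y"
proof -
  have "\<exists>!z. z \<in> USet C P \<and> (\<forall>i\<in>E. UMap C (\<pi> i) z = UMap C (\<pi> i) y)"
    using umap_in_uset[OF power_proj_in_hom[OF assms(1)] assms(4)]
    by (rule concrete_power_ex1[OF assms(2)])
  with assms(3-5) show ?thesis by blast
qed

text \<open>Any two powers are isomorphic, so being concrete does not depend on the choice of power.\<close>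

lemma concrete_power_transfer:
  assumes pw: "is_power C A E P \<pi>" and cp: "concrete_power C A E P \<pi>"
    and pw': "is_power C A E P' \<pi>'"
  shows "concrete_power C A E P' \<pi>'"
proof -
  obtain u where u: "u \<in> hom C P' P" "\<forall>i\<in>E. Cmp C (\<pi> i) u = \<pi>' i"
    using power_lift[where h=\<pi>', OF pw _ power_proj_in_hom[OF pw']] power_objs[OF pw'] by blast
  obtain v where v: "v \<in> hom C P P'" "\<forall>i\<in>E. Cmp C (\<pi>' i) v = \<pi> i"
    using power_lift[where h=\<pi>, OF pw' _ power_proj_in_hom[OF pw]] power_objs[OF pw] by blast
  have proj_u: "UMap C (\<pi> i) (UMap C u y) = UMap C (\<pi>' i) y" if "i \<in> E" "y \<in> USet C P'" for i y
    using u that umap_comp[OF u(1) power_proj_in_hom[OF pw]] by simp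
  have proj_v: "UMap C (\<pi>' i) (UMap C v x) = UMap C (\<pi> i) x" if "i \<in> E" "x \<in> USet C P" for i x
    using v that umap_comp[OF v(1) power_proj_in_hom[OF pw']] by simp
  have vu: "Cmp C v u = Idm C P'"
  proof (rule power_lift_unique[OF pw' comp_in_hom[OF u(1) v(1)]])
    show "Idm C P' \<in> hom C P' P'"
      using id_in_hom power_objs[OF pw'] by blast
    show "\<forall>i\<in>E. Cmp C (\<pi>' i) (Cmp C v u) = Cmp C (\<pi>' i) (Idm C P')"
      using u v comp_assoc[OF u(1) v(1) power_proj_in_hom[OF pw']]
      by (simp add: comp_id_right[OF power_proj_in_hom[OF pw']])
  qed
  have vu_point: "UMap C v (UMap C u y) = y" if "y \<in> USet C P'" for y
    using umap_comp[OF u(1) v(1) that] vu umap_id[OF _ that] power_objs[OF pw'] by simp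
  show ?thesis
  proof (rule concrete_powerI)
    fix \<psi> assume "\<And>i. i \<in> E \<Longrightarrow> \<psi> i \<in> USet C A"
    then obtain x where x: "x \<in> USet C P" "\<forall>i\<in>E. UMap C (\<pi> i) x = \<psi> i"
      by (rule concrete_power_obtain[OF cp])
    show "\<exists>y\<in>USet C P'. \<forall>i\<in>E. UMap C (\<pi>' i) y = \<psi> i"
    proof
      show "UMap C v x \<in> USet C P'"
        using umap_in_uset[OF v(1) x(1)] .
      show "\<forall>i\<in>E. UMap C (\<pi>' i) (UMap C v x) = \<psi> i"
        using proj_v x by simp
    qed
  next
    fix y y' assume y: "y \<in> USet C P'" "y' \<in> USet C P'"
      and "\<forall>i\<in>E. UMap C (\<pi>' i) y = UMap C (\<pi>' i) y'"
    then have "\<forall>i\<in>E. UMap C (\<pi> i) (UMap C u y) = UMap C (\<pi> i) (UMap C u y')"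
      using y proj_u by simp
    then have "UMap C u y = UMap C u y'"
      using power_points_eqI[OF pw cp] umap_in_uset[OF u(1)] y by blast
    then have "UMap C v (UMap C u y) = UMap C v (UMap C u y')"
      by simp
    then show "y = y'"
      by (simp only: vu_point y)
  qed
qed

end

section \<open>Finite powers from a terminal object and fibered products\<close>

locale concrete_finite_limits = concrete +
  fixes \<epsilon> :: 'o
  assumes terminal: "is_terminal C \<epsilon>"
    and terminal_singleton: "\<exists>t. USet C \<epsilon> = {t}"
    and fibered_products: "has_fibered_products C"
begin

lemma terminal_obj: "\<epsilon> \<in> Obj C"
  using terminal unfolding is_terminal_def by blast

lemma terminal_ex1: "X \<in> Obj C \<Longrightarrow> \<exists>!f. f \<in> hom C X \<epsilon>"
  using terminal unfolding is_terminal_def by blast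

lemma terminal_arrow_unique: "f \<in> hom C X \<epsilon> \<Longrightarrow> g \<in> hom C X \<epsilon> \<Longrightarrow> f = g"
  using terminal_ex1[OF conjunct1[OF hom_objs]] by blast

lemma pullback_exists:
  assumes "f \<in> hom C X Z" and "g \<in> hom C Y Z"
  obtains P p q where "is_pullback C f g P p q"
proof -
  have "f \<in> Mor C" "g \<in> Mor C" "Cod C f = Cod C g"
    using assms unfolding hom_def by auto
  then show thesis
    using fibered_products that unfolding has_fibered_products_def by blast
qed

lemma pullback_points:
  assumes "is_pullback C f g P p q"
  shows "bij_betw (\<lambda>x. (UMap C p x, UMap C q x)) (USet C P)
     {(x, y). x \<in> USet C (Dom C f) \<and> y \<in> USet C (Dom C g) \<and> UMap C f x = UMap C g y}"
  using assms fibered_products unfolding has_fibered_products_def by blast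

lemma power_empty:
  assumes "A \<in> Obj C"
  shows "is_power C A {} \<epsilon> \<pi> \<and> concrete_power C A {} \<epsilon> \<pi>"
  using assms terminal_obj terminal_ex1 terminal_singleton
  unfolding is_power_def concrete_power_def by auto

lemma pullback_power_insert:
  assumes pw: "is_power C A E P \<pi>" and e: "e \<notin> E"
    and tA: "tA \<in> hom C A \<epsilon>" and tP: "tP \<in> hom C P \<epsilon>"
    and pb: "is_pullback C tA tP Q p q"
  shows "is_power C A (insert e E) Q ((\<lambda>i. Cmp C (\<pi> i) q)(e := p))"
    (is "is_power C A _ Q ?\<pi>")
proof -
  have dom: "Dom C tA = A" "Dom C tP = P"
    using tA tP unfolding hom_def by auto
  have Q: "Q \<in> Obj C" and p: "p \<in> hom C Q A" and q: "q \<in> hom C Q P"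
    using pb unfolding is_pullback_def dom by auto
  have proj: "?\<pi> i \<in> hom C Q A" if "i \<in> insert e E" for i
    using that p comp_in_hom[OF q power_proj_in_hom[OF pw]] by auto
  have lift: "\<exists>!u. u \<in> hom C X Q \<and> (\<forall>i\<in>insert e E. Cmp C (?\<pi> i) u = h i)"
    if X: "X \<in> Obj C" and h: "\<And>i. i \<in> insert e E \<Longrightarrow> h i \<in> hom C X A" for X h
  proof -
    obtain u0 where u0: "u0 \<in> hom C X P" "\<forall>i\<in>E. Cmp C (\<pi> i) u0 = h i"
      using power_lift[OF pw X, of h] h by blast
    have he: "h e \<in> hom C X A"
      using h by blast
    have "Cmp C tA (h e) = Cmp C tP u0"
      using terminal_arrow_unique[OF comp_in_hom[OF he tA] comp_in_hom[OF u0(1) tP]] .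
    then have ex1: "\<exists>!u. u \<in> hom C X Q \<and> Cmp C p u = h e \<and> Cmp C q u = u0"
      using pb X he u0(1) unfolding is_pullback_def dom by blast
    have lift_iff: "(\<forall>i\<in>insert e E. Cmp C (?\<pi> i) u = h i) \<longleftrightarrow> Cmp C p u = h e \<and> Cmp C q u = u0"
      if u: "u \<in> hom C X Q" for u
    proof -
      have comp: "Cmp C (Cmp C (\<pi> i) q) u = Cmp C (\<pi> i) (Cmp C q u)" if "i \<in> E" for i
        using comp_assoc[OF u q power_proj_in_hom[OF pw that]] by simp
      have "(\<forall>i\<in>E. Cmp C (\<pi> i) (Cmp C q u) = h i) \<longleftrightarrow> Cmp C q u = u0"
        using power_lift_unique[OF pw comp_in_hom[OF u q] u0(1)] u0(2) by auto
      then show ?thesis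
        using e comp by auto
    qed
    have "(u \<in> hom C X Q \<and> (\<forall>i\<in>insert e E. Cmp C (?\<pi> i) u = h i))
        \<longleftrightarrow> (u \<in> hom C X Q \<and> Cmp C p u = h e \<and> Cmp C q u = u0)" for u
      using lift_iff by blast
    with ex1 show ?thesis
      by presburger
  qed
  show ?thesis
    unfolding is_power_def
  proof (intro conjI ballI allI impI)
    show "A \<in> Obj C"
      using power_objs[OF pw] by blast
  qed (fact Q, fact proj, erule lift, blast)
qed

lemma pullback_concrete_power_insert:
  assumes pw: "is_power C A E P \<pi>" and cp: "concrete_power C A E P \<pi>" and e: "e \<notin> E"
    and tA: "tA \<in> hom C A \<epsilon>" and tP: "tP \<in> hom C P \<epsilon>"
    and pb: "is_pullback C tA tP Q p q"
  shows "concrete_power C A (insert e E) Q ((\<lambda>i. Cmp C (\<pi> i) q)(e := p))"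
    (is "concrete_power C A _ Q ?\<pi>")
proof -
  have dom: "Dom C tA = A" "Dom C tP = P"
    using tA tP unfolding hom_def by auto
  have p: "p \<in> hom C Q A" and q: "q \<in> hom C Q P"
    using pb unfolding is_pullback_def dom by auto
  have bij: "bij_betw (\<lambda>x. (UMap C p x, UMap C q x)) (USet C Q)
      {(x, y). x \<in> USet C A \<and> y \<in> USet C P \<and> UMap C tA x = UMap C tP y}"
    using pullback_points[OF pb] unfolding dom .
  have proj: "UMap C (?\<pi> i) x = UMap C (\<pi> i) (UMap C q x)" if "i \<in> E" "x \<in> USet C Q" for i x
    using that e umap_comp[OF q power_proj_in_hom[OF pw that(1)] that(2)] by auto
  show ?thesis
  proof (rule concrete_powerI)
    fix \<psi> assume \<psi>: "\<And>i. i \<in> insert e E \<Longrightarrow> \<psi> i \<in> USet C A"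
    then obtain y where y: "y \<in> USet C P" "\<forall>i\<in>E. UMap C (\<pi> i) y = \<psi> i"
      using concrete_power_obtain[OF cp, of \<psi>] by blast
    have "UMap C tA (\<psi> e) = UMap C tP y"
      using umap_in_uset[OF tA \<psi>[OF insertI1]] umap_in_uset[OF tP y(1)] terminal_singleton
      by force
    then have "(\<psi> e, y) \<in> (\<lambda>x. (UMap C p x, UMap C q x)) ` USet C Q"
      using bij \<psi> y(1) unfolding bij_betw_def by auto
    then obtain x where "x \<in> USet C Q" "UMap C p x = \<psi> e" "UMap C q x = y"
      by auto
    then show "\<exists>x\<in>USet C Q. \<forall>i\<in>insert e E. UMap C (?\<pi> i) x = \<psi> i"
      using proj y(2) by auto
  next
    fix x x' assume x: "x \<in> USet C Q" "x' \<in> USet C Q"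
      and eq: "\<forall>i\<in>insert e E. UMap C (?\<pi> i) x = UMap C (?\<pi> i) x'"
    have "\<forall>i\<in>E. UMap C (\<pi> i) (UMap C q x) = UMap C (\<pi> i) (UMap C q x')"
    proof
      fix i assume i: "i \<in> E"
      then show "UMap C (\<pi> i) (UMap C q x) = UMap C (\<pi> i) (UMap C q x')"
        using bspec[OF eq insertI2[OF i]] proj[OF i x(1)] proj[OF i x(2)] by simp
    qed
    then have "UMap C q x = UMap C q x'"
      by (rule power_points_eqI[OF pw cp umap_in_uset[OF q x(1)] umap_in_uset[OF q x(2)]])
    moreover have "UMap C p x = UMap C p x'"
      using bspec[OF eq insertI1] by simp
    ultimately show "x = x'"
      using inj_onD[OF bij_betw_imp_inj_on[OF bij] _ x] by simp
  qed
qed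

lemma concrete_power_exists:
  assumes "finite E" and "A \<in> Obj C"
  shows "\<exists>P \<pi>. is_power C A E P \<pi> \<and> concrete_power C A E P \<pi>"
  using assms(1)
proof (induction E rule: finite_induct)
  case empty
  show ?case
    using power_empty[OF assms(2)] by blast
next
  case (insert e E)
  then obtain P \<pi> where pw: "is_power C A E P \<pi>" and cp: "concrete_power C A E P \<pi>"
    by blast
  obtain tA tP where tA: "tA \<in> hom C A \<epsilon>" and tP: "tP \<in> hom C P \<epsilon>"
    using terminal_ex1 assms(2) conjunct2[OF power_objs[OF pw]] by blast
  obtain Q p q where "is_pullback C tA tP Q p q"
    using pullback_exists[OF tA tP] .
  then show ?case
    using pullback_power_insert[OF pw insert.hyps(2) tA tP]
      pullback_concrete_power_insert[OF pw cp insert.hyps(2) tA tP] by blast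
qed

end

context concrete
begin

lemma left_inverse_eq_right_inverse:
  assumes f: "f \<in> hom C X Y" and g: "g \<in> hom C Y X" and k: "k \<in> hom C Y X"
    and gf: "Cmp C g f = Idm C X" and fk: "Cmp C f k = Idm C Y"
  shows "g = k"
proof -
  have "g = Cmp C g (Cmp C f k)"
    by (simp add: fk comp_id_right[OF g])
  also have "\<dots> = Cmp C (Cmp C g f) k"
    by (rule comp_assoc[OF k f g])
  also have "\<dots> = k"
    by (simp add: gf comp_id_left[OF k])
  finally show ?thesis .
qed

lemma epi_if_right_inverse:
  assumes f: "f \<in> hom C X Y" and g: "g \<in> hom C Y X" and fg: "Cmp C f g = Idm C Y"
  shows "epi C f"
  unfolding epi_def
proof (intro conjI ballI allI impI)
  show "f \<in> Mor C"
    using f unfolding hom_def by simp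
  fix Z u v assume "u \<in> hom C (Cod C f) Z \<and> v \<in> hom C (Cod C f) Z \<and> Cmp C u f = Cmp C v f"
  then have u: "u \<in> hom C Y Z" and v: "v \<in> hom C Y Z" and eq: "Cmp C u f = Cmp C v f"
    using f unfolding hom_def by auto
  have "u = Cmp C u (Cmp C f g)"
    by (simp add: fg comp_id_right[OF u])
  also have "\<dots> = Cmp C (Cmp C v f) g"
    by (simp add: comp_assoc[OF g f u] eq)
  also have "\<dots> = v"
    by (simp add: comp_assoc[OF g f v, symmetric] fg comp_id_right[OF v])
  finally show "u = v" .
qed

lemma mono_if_left_inverse:
  assumes f: "f \<in> hom C X Y" and g: "g \<in> hom C Y X" and gf: "Cmp C g f = Idm C X"
  shows "mono C f"
  unfolding mono_def
proof (intro conjI ballI allI impI)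
  show "f \<in> Mor C"
    using f unfolding hom_def by simp
  fix Z u v assume "u \<in> hom C Z (Dom C f) \<and> v \<in> hom C Z (Dom C f) \<and> Cmp C f u = Cmp C f v"
  then have u: "u \<in> hom C Z X" and v: "v \<in> hom C Z X" and eq: "Cmp C f u = Cmp C f v"
    using f unfolding hom_def by auto
  have "u = Cmp C (Cmp C g f) u"
    by (simp add: gf comp_id_left[OF u])
  also have "\<dots> = Cmp C g (Cmp C f v)"
    by (simp add: comp_assoc[OF u f g, symmetric] eq)
  also have "\<dots> = v"
    by (simp add: comp_assoc[OF v f g] gf comp_id_left[OF v])
  finally show "u = v" .
qed

lemma left_inverse_imp_inverse:
  assumes "hopfian C X \<or> cohopfian C X" and f: "f \<in> hom C X X" and g: "g \<in> hom C X X"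
    and gf: "Cmp C g f = Idm C X"
  shows "Cmp C f g = Idm C X"
  using assms(1)
proof
  assume "hopfian C X"
  then have "iso C g"
    using epi_if_right_inverse[OF g f gf] g unfolding hopfian_def by blast
  then obtain g' where g': "g' \<in> hom C X X" "Cmp C g' g = Idm C X"
    using g unfolding iso_def hom_def by auto
  have "g' = f"
    by (rule left_inverse_eq_right_inverse[OF g g'(1) f g'(2) gf])
  with g' show ?thesis
    by simp
next
  assume "cohopfian C X"
  then have "iso C f"
    using mono_if_left_inverse[OF f g gf] f unfolding cohopfian_def by blast
  then obtain f' where f': "f' \<in> hom C X X" "Cmp C f f' = Idm C X"
    using f unfolding iso_def hom_def by auto
  have "g = f'"
    by (rule left_inverse_eq_right_inverse[OF f g f'(1) gf f'(2)])
  with f' show ?thesis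
    by simp
qed

end

lemma power_hopfian_or_cohopfian:
  assumes "fin_prod_hopfian C A \<or> fin_prod_cohopfian C A" and "finite I"
    and "is_power C A I P \<pi>"
  shows "hopfian C P \<or> cohopfian C P"
proof -
  obtain \<beta> where "bij_betw \<beta> {..<card I} I"
    using ex_bij_betw_nat_finite[OF assms(2)] by (auto simp: atLeast0LessThan)
  then have "is_power C A {..<card I} P (\<pi> \<circ> \<beta>)"
    by (rule power_reindex[OF assms(3)])
  with assms(1) show ?thesis
    unfolding fin_prod_hopfian_def fin_prod_cohopfian_def by blast
qed

definition local_map :: "('o, 'm, 'e) concrete_cat \<Rightarrow> 'm \<Rightarrow> 'o \<Rightarrow> ('g \<Rightarrow> 'm) \<Rightarrow> 'g set \<Rightarrow> ('g \<Rightarrow> 'e) \<Rightarrow> 'e"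
  where "local_map C f P \<pi> M \<psi> = UMap C f (THE x. x \<in> USet C P \<and> (\<forall>m\<in>M. UMap C (\<pi> m) x = \<psi> m))"

definition is_local_rule :: "('o, 'm, 'e) concrete_cat \<Rightarrow> 'o \<Rightarrow> 'g set \<Rightarrow> 'o \<Rightarrow> ('g \<Rightarrow> 'm) \<Rightarrow> 'm
    \<Rightarrow> (('g::plus \<Rightarrow> 'e) \<Rightarrow> ('g \<Rightarrow> 'e)) \<Rightarrow> bool"
  where "is_local_rule C A M P \<pi> f \<tau> \<longleftrightarrow> finite M \<and> is_power C A M P \<pi> \<and> concrete_power C A M P \<pi>
           \<and> f \<in> hom C P A \<and> (\<forall>c\<in>configs C A. \<forall>g. \<tau> c g = local_map C f P \<pi> M (\<lambda>m. c (g + m)))"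

lemma local_map_cong:
  assumes "\<And>m. m \<in> M \<Longrightarrow> \<psi> m = \<psi>' m"
  shows "local_map C f P \<pi> M \<psi> = local_map C f P \<pi> M \<psi>'"
proof -
  have "(\<lambda>x. x \<in> USet C P \<and> (\<forall>m\<in>M. UMap C (\<pi> m) x = \<psi> m))
      = (\<lambda>x. x \<in> USet C P \<and> (\<forall>m\<in>M. UMap C (\<pi> m) x = \<psi>' m))"
    using assms by auto
  then show ?thesis
    unfolding local_map_def by simp
qed

context concrete
begin

lemma local_map_eq:
  assumes "is_power C A M P \<pi>" and "concrete_power C A M P \<pi>"
    and "x \<in> USet C P" and "\<forall>m\<in>M. UMap C (\<pi> m) x = \<psi> m"
  shows "local_map C f P \<pi> M \<psi> = UMap C f x"
proof -
  have "(THE x. x \<in> USet C P \<and> (\<forall>m\<in>M. UMap C (\<pi> m) x = \<psi> m)) = x"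
  proof (rule the_equality)
    fix y assume "y \<in> USet C P \<and> (\<forall>m\<in>M. UMap C (\<pi> m) y = \<psi> m)"
    then show "y = x"
      using power_points_eqI[OF assms(1,2), of y x] assms(3,4) by simp
  qed (use assms(3,4) in blast)
  then show ?thesis
    unfolding local_map_def by simp
qed

lemma local_map_in_uset:
  assumes "is_power C A M P \<pi>" and "concrete_power C A M P \<pi>" and "f \<in> hom C P A"
    and "\<And>m. m \<in> M \<Longrightarrow> \<psi> m \<in> USet C A"
  shows "local_map C f P \<pi> M \<psi> \<in> USet C A"
proof -
  obtain x where "x \<in> USet C P" "\<forall>m\<in>M. UMap C (\<pi> m) x = \<psi> m"
    using concrete_power_obtain[OF assms(2,4)] .
  then show ?thesis
    using local_map_eq[OF assms(1,2)] umap_in_uset[OF assms(3)] by simp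
qed

lemma local_rule_configs:
  assumes "is_local_rule C A M P \<pi> f \<tau>" and "c \<in> configs C A"
  shows "\<tau> c \<in> configs C A"
proof -
  have "\<tau> c g \<in> USet C A" for g
    using assms local_map_in_uset[of A M P \<pi> f "\<lambda>m. c (g + m)"]
    unfolding is_local_rule_def configs_def by simp
  then show ?thesis
    unfolding configs_def by simp
qed

end

lemma (in concrete_finite_limits) CA_local_rule:
  assumes "\<tau> \<in> CA C A a" and "A \<in> Obj C"
  shows "\<exists>M P \<pi> f. is_local_rule C A M P \<pi> f \<tau>"
proof -
  obtain M P \<pi> f where M: "finite M" and pw: "is_power C A M P \<pi>" and f: "f \<in> hom C P A"
    and \<tau>: "\<forall>c\<in>configs C A. \<forall>g. \<tau> c g = local_map C f P \<pi> M (\<lambda>m. c (g + m))"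
    using assms(1) unfolding CA_def local_map_def by blast
  obtain P' \<pi>' where "is_power C A M P' \<pi>'" and "concrete_power C A M P' \<pi>'"
    using concrete_power_exists[OF M assms(2)] by blast
  then have "concrete_power C A M P \<pi>"
    using concrete_power_transfer pw by blast
  then show ?thesis
    using M pw f \<tau> unfolding is_local_rule_def by blast
qed

definition partial_right_action :: "'g::monoid_add set \<Rightarrow> 'i set \<Rightarrow> ('i \<Rightarrow> 'g \<Rightarrow> 'i) \<Rightarrow> bool"
  where "partial_right_action S I s \<longleftrightarrow> (\<forall>h\<in>I. s h 0 = h \<and> (\<forall>a\<in>S. s h a \<in> I
           \<and> (\<forall>b\<in>S. a + b \<in> S \<longrightarrow> s (s h a) b = s h (a + b))))"

lemma LEF_partial_right_action:
  fixes S :: "'g::group_add set"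
  assumes "LEF TYPE('g)" and "finite S" and "0 \<in> S"
  obtains I :: "nat set" and e and s :: "nat \<Rightarrow> 'g \<Rightarrow> nat"
  where "finite I" and "e \<in> I" and "partial_right_action S I s" and "inj_on (s e) S"
proof -
  obtain H :: "nat monoid" and \<phi> where H: "group H" "finite (carrier H)"
    and \<phi>: "\<phi> \<in> S \<rightarrow> carrier H" "inj_on \<phi> S"
    and \<phi>_add: "\<forall>a\<in>S. \<forall>b\<in>S. a + b \<in> S \<longrightarrow> \<phi> (a + b) = \<phi> a \<otimes>\<^bsub>H\<^esub> \<phi> b"
    using assms(1,2) unfolding LEF_def by blast
  interpret H: group H
    by (fact H(1))
  have \<phi>_in: "\<phi> a \<in> carrier H" if "a \<in> S" for a
    using \<phi>(1) that by blast
  have "\<phi> 0 \<otimes>\<^bsub>H\<^esub> \<phi> 0 = \<phi> 0"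
    using \<phi>_add assms(3) by (metis add_0)
  then have \<phi>_0: "\<phi> 0 = \<one>\<^bsub>H\<^esub>"
    using \<phi>_in[OF assms(3)] by simp
  show thesis
  proof (rule that)
    show "partial_right_action S (carrier H) (\<lambda>h a. h \<otimes>\<^bsub>H\<^esub> \<phi> a)"
      unfolding partial_right_action_def using \<phi>_in \<phi>_0 \<phi>_add by (simp add: H.m_assoc)
    have "inj_on (\<lambda>a. \<one>\<^bsub>H\<^esub> \<otimes>\<^bsub>H\<^esub> \<phi> a) S = inj_on \<phi> S"
      using \<phi>_in by (intro inj_on_cong) simp
    then show "inj_on (\<lambda>a. \<one>\<^bsub>H\<^esub> \<otimes>\<^bsub>H\<^esub> \<phi> a) S"
      using \<phi>(2) by simp
  qed (use H(2) in simp_all)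
qed

section \<open>Simulating cellular automata on finite powers\<close>

text \<open>T is the endomorphism of the power Q = A^I that applies the local rule at every h \<in> I,
  reading the neighbour of h at m \<in> M as s h m.\<close>

definition induced_endo :: "('o, 'm, 'e) concrete_cat \<Rightarrow> 'g set \<Rightarrow> 'o \<Rightarrow> ('g \<Rightarrow> 'm) \<Rightarrow> 'm
    \<Rightarrow> 'o \<Rightarrow> 'i set \<Rightarrow> ('i \<Rightarrow> 'm) \<Rightarrow> ('i \<Rightarrow> 'g \<Rightarrow> 'i) \<Rightarrow> 'm \<Rightarrow> bool"
  where "induced_endo C M P \<pi> f Q I \<rho> s T \<longleftrightarrow> T \<in> hom C Q Q \<and> (\<forall>x\<in>USet C Q. \<forall>h\<in>I.
           UMap C (\<rho> h) (UMap C T x) = local_map C f P \<pi> M (\<lambda>m. UMap C (\<rho> (s h m)) x))"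

context concrete
begin

lemma induced_endo_exists:
  assumes rule: "is_local_rule C A M P \<pi> f \<tau>" and pw: "is_power C A I Q \<rho>"
    and s: "\<And>h m. h \<in> I \<Longrightarrow> m \<in> M \<Longrightarrow> s h m \<in> I"
  shows "\<exists>T. induced_endo C M P \<pi> f Q I \<rho> s T"
proof -
  have pwM: "is_power C A M P \<pi>" and cpM: "concrete_power C A M P \<pi>" and f: "f \<in> hom C P A"
    using rule unfolding is_local_rule_def by auto
  have Q: "Q \<in> Obj C"
    using power_objs[OF pw] by blast
  have "\<exists>r. r \<in> hom C Q P \<and> (\<forall>m\<in>M. Cmp C (\<pi> m) r = \<rho> (s h m))" if h: "h \<in> I" for h
    using power_lift[where h="\<lambda>m. \<rho> (s h m)", OF pwM Q power_proj_in_hom[OF pw s[OF h]]]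
    by blast
  then obtain r where r: "\<And>h. h \<in> I \<Longrightarrow> r h \<in> hom C Q P"
    and r_proj: "\<And>h m. h \<in> I \<Longrightarrow> m \<in> M \<Longrightarrow> Cmp C (\<pi> m) (r h) = \<rho> (s h m)"
    by metis
  obtain T where T: "T \<in> hom C Q Q" and T_proj: "\<forall>h\<in>I. Cmp C (\<rho> h) T = Cmp C f (r h)"
    using power_lift[OF pw Q, of "\<lambda>h. Cmp C f (r h)"] comp_in_hom[OF r f] by blast
  have "UMap C (\<rho> h) (UMap C T x) = local_map C f P \<pi> M (\<lambda>m. UMap C (\<rho> (s h m)) x)"
    if x: "x \<in> USet C Q" and h: "h \<in> I" for x h
  proof -
    have "\<forall>m\<in>M. UMap C (\<pi> m) (UMap C (r h) x) = UMap C (\<rho> (s h m)) x"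
      using umap_comp[OF r[OF h] power_proj_in_hom[OF pwM] x] r_proj[OF h] by simp
    then have "local_map C f P \<pi> M (\<lambda>m. UMap C (\<rho> (s h m)) x) = UMap C f (UMap C (r h) x)"
      using local_map_eq[OF pwM cpM umap_in_uset[OF r[OF h] x]] by simp
    also have "\<dots> = UMap C (\<rho> h) (UMap C T x)"
      using umap_comp[OF r[OF h] f x] umap_comp[OF T power_proj_in_hom[OF pw h] x] T_proj h
      by simp
    finally show ?thesis
      by simp
  qed
  then show ?thesis
    using T unfolding induced_endo_def by blast
qed

lemma induced_endo_simulates:
  assumes rule: "is_local_rule C A M P \<pi> f \<tau>" and T: "induced_endo C M P \<pi> f Q I \<rho> s T"
    and "x \<in> USet C Q" and "h \<in> I" and "c \<in> configs C A"
    and agree: "\<forall>m\<in>M. UMap C (\<rho> (s h m)) x = c (g + m)"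
  shows "UMap C (\<rho> h) (UMap C T x) = \<tau> c g"
proof -
  have "UMap C (\<rho> h) (UMap C T x) = local_map C f P \<pi> M (\<lambda>m. UMap C (\<rho> (s h m)) x)"
    using T assms(3,4) unfolding induced_endo_def by blast
  also have "\<dots> = local_map C f P \<pi> M (\<lambda>m. c (g + m))"
    using agree by (intro local_map_cong) simp
  also have "\<dots> = \<tau> c g"
    using rule assms(5) unfolding is_local_rule_def by simp
  finally show ?thesis .
qed

lemma induced_endo_comp_simulates:
  assumes act: "partial_right_action S I s"
    and rule1: "is_local_rule C A M1 P1 \<pi>1 f1 \<tau>1" and T1: "induced_endo C M1 P1 \<pi>1 f1 Q I \<rho> s T1"
    and rule2: "is_local_rule C A M2 P2 \<pi>2 f2 \<tau>2" and T2: "induced_endo C M2 P2 \<pi>2 f2 Q I \<rho> s T2"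
    and M1: "M1 \<subseteq> S" and M2: "M2 \<subseteq> S" and sums: "\<And>b a. b \<in> M2 \<Longrightarrow> a \<in> M1 \<Longrightarrow> b + a \<in> S"
    and x: "x \<in> USet C Q" and h: "h \<in> I" and c: "c \<in> configs C A"
    and agree: "\<forall>t\<in>S. UMap C (\<rho> (s h t)) x = c (g + t)"
  shows "UMap C (\<rho> h) (UMap C T2 (UMap C T1 x)) = \<tau>2 (\<tau>1 c) g"
proof (rule induced_endo_simulates[OF rule2 T2 _ h local_rule_configs[OF rule1 c]])
  show "UMap C T1 x \<in> USet C Q"
    using T1 x umap_in_uset unfolding induced_endo_def by blast
  show "\<forall>b\<in>M2. UMap C (\<rho> (s h b)) (UMap C T1 x) = \<tau>1 c (g + b)"
  proof
    fix b assume b: "b \<in> M2"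
    have "s (s h b) a = s h (b + a)" if "a \<in> M1" for a
      using act h M1 M2 b that sums[OF b that] unfolding partial_right_action_def by blast
    then have "\<forall>a\<in>M1. UMap C (\<rho> (s (s h b) a)) x = c (g + b + a)"
      using agree M1 M2 b sums[OF b] by (simp add: add.assoc)
    moreover have "s h b \<in> I"
      using act h M2 b unfolding partial_right_action_def by blast
    ultimately show "UMap C (\<rho> (s h b)) (UMap C T1 x) = \<tau>1 c (g + b)"
      using induced_endo_simulates[OF rule1 T1 x _ c] by blast
  qed
qed

lemma induced_endo_left_inverse:
  assumes act: "partial_right_action S I s"
    and \<tau>: "is_local_rule C A Mt Pt \<pi>t ft \<tau>" and \<sigma>: "is_local_rule C A Ms Ps \<pi>s fs \<sigma>"
    and Mt: "Mt \<subseteq> S" and Ms: "Ms \<subseteq> S" and sums: "\<And>b a. b \<in> Ms \<Longrightarrow> a \<in> Mt \<Longrightarrow> b + a \<in> S"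
    and inv: "\<forall>c\<in>configs C A. \<sigma> (\<tau> c) = c"
    and pw: "is_power C A I Q \<rho>" and cp: "concrete_power C A I Q \<rho>"
    and T: "induced_endo C Mt Pt \<pi>t ft Q I \<rho> s T" and \<Sigma>: "induced_endo C Ms Ps \<pi>s fs Q I \<rho> s \<Sigma>"
  shows "Cmp C \<Sigma> T = Idm C Q"
proof -
  have T_hom: "T \<in> hom C Q Q" and \<Sigma>_hom: "\<Sigma> \<in> hom C Q Q"
    using T \<Sigma> unfolding induced_endo_def by auto
  have Q: "Q \<in> Obj C"
    using power_objs[OF pw] by blast
  show ?thesis
  proof (rule morphism_eqI[OF comp_in_hom[OF T_hom \<Sigma>_hom] id_in_hom[OF Q]])
    fix x assume x: "x \<in> USet C Q"
    have "UMap C (\<rho> h) (UMap C \<Sigma> (UMap C T x)) = UMap C (\<rho> h) x" if h: "h \<in> I" for h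
    proof -
      define c where "c t = (if t \<in> S then UMap C (\<rho> (s h t)) x else UMap C (\<rho> h) x)" for t
      have c: "c \<in> configs C A"
        using act h x umap_in_uset[OF power_proj_in_hom[OF pw]]
        unfolding c_def configs_def partial_right_action_def by auto
      have agree: "\<forall>t\<in>S. UMap C (\<rho> (s h t)) x = c (0 + t)"
        unfolding c_def by simp
      have "UMap C (\<rho> h) (UMap C \<Sigma> (UMap C T x)) = \<sigma> (\<tau> c) 0"
        by (rule induced_endo_comp_simulates[OF act \<tau> T \<sigma> \<Sigma> Mt Ms sums x h c agree])
      also have "\<dots> = c 0"
        using inv c by simp
      also have "\<dots> = UMap C (\<rho> h) x"
        using act h unfolding c_def partial_right_action_def by simp
      finally show ?thesis .
    qed
    then have "UMap C \<Sigma> (UMap C T x) = x"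
      using power_points_eqI[OF pw cp] umap_in_uset[OF \<Sigma>_hom umap_in_uset[OF T_hom x]] x
      by blast
    then show "UMap C (Cmp C \<Sigma> T) x = UMap C (Idm C Q) x"
      using umap_comp[OF T_hom \<Sigma>_hom x] umap_id[OF Q x] by simp
  qed
qed

lemma CA_right_inverse_if_induced_inverse:
  fixes \<tau> \<sigma> :: "('g::group_add \<Rightarrow> 'e) \<Rightarrow> ('g \<Rightarrow> 'e)"
  assumes act: "partial_right_action S I s" and "0 \<in> S" and "e \<in> I" and inj: "inj_on (s e) S"
    and \<tau>: "is_local_rule C A Mt Pt \<pi>t ft \<tau>" and \<sigma>: "is_local_rule C A Ms Ps \<pi>s fs \<sigma>"
    and Mt: "Mt \<subseteq> S" and Ms: "Ms \<subseteq> S" and sums: "\<And>a b. a \<in> Mt \<Longrightarrow> b \<in> Ms \<Longrightarrow> a + b \<in> S"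
    and pw: "is_power C A I Q \<rho>" and cp: "concrete_power C A I Q \<rho>"
    and T: "induced_endo C Mt Pt \<pi>t ft Q I \<rho> s T" and \<Sigma>: "induced_endo C Ms Ps \<pi>s fs Q I \<rho> s \<Sigma>"
    and inv: "Cmp C T \<Sigma> = Idm C Q"
  shows "\<forall>c\<in>configs C A. \<tau> (\<sigma> c) = c"
proof (intro ballI ext)
  fix c :: "'g \<Rightarrow> 'e" and g :: 'g
  assume c: "c \<in> configs C A"
  \<comment> \<open>read c near g into A^I along the orbit of e, using that s e is injective on S\<close>
  define \<psi> where "\<psi> k = (if k \<in> s e ` S then c (g + inv_into S (s e) k) else c g)" for k
  have "\<psi> k \<in> USet C A" if "k \<in> I" for k
    using c unfolding \<psi>_def configs_def by simp
  then obtain x where x: "x \<in> USet C Q" and x_proj: "\<forall>k\<in>I. UMap C (\<rho> k) x = \<psi> k"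
    by (rule concrete_power_obtain[OF cp])
  have agree: "\<forall>t\<in>S. UMap C (\<rho> (s e t)) x = c (g + t)"
    using act \<open>e \<in> I\<close> x_proj inj unfolding \<psi>_def partial_right_action_def by auto
  have T_hom: "T \<in> hom C Q Q" and \<Sigma>_hom: "\<Sigma> \<in> hom C Q Q"
    using T \<Sigma> unfolding induced_endo_def by auto
  have "s e 0 = e"
    using act \<open>e \<in> I\<close> unfolding partial_right_action_def by blast
  then have "c g = UMap C (\<rho> e) x"
    using bspec[OF agree \<open>0 \<in> S\<close>] by simp
  also have "\<dots> = UMap C (\<rho> e) (UMap C T (UMap C \<Sigma> x))"
    using umap_comp[OF \<Sigma>_hom T_hom x] inv umap_id[OF _ x] power_objs[OF pw] by simp
  also have "\<dots> = \<tau> (\<sigma> c) g"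
    by (rule induced_endo_comp_simulates[OF act \<sigma> \<Sigma> \<tau> T Ms Mt sums x \<open>e \<in> I\<close> c agree])
  finally show "\<tau> (\<sigma> c) g = c g"
    by simp
qed

end

theorem theorem6p1:
  fixes C :: "('o, 'm, 'e) concrete_cat"
    and A eps :: 'o and a :: 'm
    and \<tau> \<sigma> :: "('g::group_add \<Rightarrow> 'e) \<Rightarrow> ('g \<Rightarrow> 'e)"
  assumes "LEF TYPE('g)"
    and "concrete_category C"
    and "has_terminal_object C"
    and "has_fibered_products C"
    and "is_terminal C eps"
    and "A \<in> Obj C"
    and "a \<in> hom C eps A"
    and "fin_prod_hopfian C A \<or> fin_prod_cohopfian C A"
    and "\<tau> \<in> CA C A a" and "\<sigma> \<in> CA C A a"
    and "\<forall>c \<in> configs C A. \<sigma> (\<tau> c) = c"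
  shows "\<forall>c \<in> configs C A. \<tau> (\<sigma> c) = c"
proof -
  interpret concrete_finite_limits C eps
    using assms(2-5) concrete_category_imp_concrete
    by (simp add: concrete_finite_limits_def concrete_finite_limits_axioms_def has_terminal_object_def)
  obtain Mt Pt \<pi>t ft Ms Ps \<pi>s fs where
    \<tau>: "is_local_rule C A Mt Pt \<pi>t ft \<tau>" and \<sigma>: "is_local_rule C A Ms Ps \<pi>s fs \<sigma>"
    using CA_local_rule[OF assms(9,6)] CA_local_rule[OF assms(10,6)] by blast
  define S where "S = insert 0 (Mt \<union> Ms \<union> (\<Union>a\<in>Mt. \<Union>b\<in>Ms. {a + b, b + a}))"
  have S: "finite S" "0 \<in> S" "Mt \<subseteq> S" "Ms \<subseteq> S"
    and sums: "\<And>a b. a \<in> Mt \<Longrightarrow> b \<in> Ms \<Longrightarrow> a + b \<in> S \<and> b + a \<in> S"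
    using \<tau> \<sigma> unfolding S_def is_local_rule_def by auto
  obtain I :: "nat set" and e s where I: "finite I" "e \<in> I" and act: "partial_right_action S I s"
    and inj: "inj_on (s e) S"
    by (rule LEF_partial_right_action[OF assms(1) S(1,2)])
  obtain Q \<rho> where pw: "is_power C A I Q \<rho>" and cp: "concrete_power C A I Q \<rho>"
    using concrete_power_exists[OF I(1) assms(6)] by blast
  have shift: "s h m \<in> I" if "h \<in> I" "m \<in> S" for h m
    using act that unfolding partial_right_action_def by blast
  obtain T \<Sigma> where T: "induced_endo C Mt Pt \<pi>t ft Q I \<rho> s T"
    and \<Sigma>: "induced_endo C Ms Ps \<pi>s fs Q I \<rho> s \<Sigma>"
    using induced_endo_exists[OF \<tau> pw] induced_endo_exists[OF \<sigma> pw] shift S(3,4) by blast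
  have "Cmp C \<Sigma> T = Idm C Q"
    using induced_endo_left_inverse[OF act \<tau> \<sigma> S(3,4) _ assms(11) pw cp T \<Sigma>] sums by blast
  then have "Cmp C T \<Sigma> = Idm C Q"
    using left_inverse_imp_inverse[OF power_hopfian_or_cohopfian[OF assms(8) I(1) pw]] T \<Sigma>
    unfolding induced_endo_def by blast
  then show ?thesis
    using CA_right_inverse_if_induced_inverse[OF act S(2) I(2) inj \<tau> \<sigma> S(3,4) _ pw cp T \<Sigma>] sums
    by blast
qed

end
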